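(* Let $\omega_s>0$, $R_s>0$, $R_r>0$, $L_s>0$, $L_r>0$, $L_m>0$ with $L_s>L_m$ and $L_r>L_m$, and let $\sigma=1-\frac{L_m^2}{L_sL_r}$. Let $$A=\begin{bmatrix} -\frac{R_s}{\sigma L_s} & \omega_s & \frac{R_sL_m}{\sigma L_sL_r} & 0 \\ -\omega_s & -\frac{R_s}{\sigma L_s} & 0 & \frac{R_sL_m}{\sigma L_sL_r}\\ \frac{R_rL_m}{\sigma L_sL_r} & 0 & -\frac{R_r}{\sigma L_r} & \omega_s \\ 0 & \frac{R_rL_m}{\sigma L_sL_r} & -\omega_s & -\frac{R_r}{\sigma L_r} \end{bmatrix},\qquad B=\begin{bmatrix}0_{2\times2}\\ I_{2\times 2}\end{bmatrix},$$ and let $K\in\mathbb{R}^{2\times 4}$ be any matrix such that $A-BK$ is asymptotically stable (all eigenvalues have negative real part). Write $(A-BK)^{-1}=[d_{ij}]_{i,j=1}^4$ and define $$q_1=\tfrac{L_m}{\sigma L_sL_r}(d_{13}d_{43}-d_{23}d_{33}),\quad q_2=\tfrac{1}{2}\tfrac{L_m}{\sigma L_sL_r}(d_{13}d_{44}+d_{14}d_{43}-d_{23}d_{34}-d_{24}d_{33}),\quad q_3=\tfrac{L_m}{\sigma L_sL_r}(d_{14}d_{44}-d_{24}d_{34}).$$ Then the matrix $\begin{bmatrix}q_1&q_2\\ q_2&q_3\end{bmatrix}$ is positive definite.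
   Context: This matrix is the Hessian (up to a factor 2) of the quadratic map $u=(u_1,u_2)\mapsto T_e(u)=\frac{L_m}{\sigma L_sL_r}(x_1x_4-x_2x_3)$, where $x=-(A-BK)^{-1}[v_{ds}\;v_{qs}\;u_1\;u_2]^T$ for fixed real constants $v_{ds},v_{qs}$; i.e. $T_e(u)=u^T\begin{bmatrix}q_1&q_2\\ q_2&q_3\end{bmatrix}u+b^Tu+a$ for some constants $b\in\mathbb{R}^2$, $a\in\mathbb{R}$. (This models the electromagnetic torque of a doubly fed induction generator at the steady state of its feedback-linearized electrical dynamics.) *)

theory Defs
  imports "HOL-Analysis.Analysis"
begin

definition complexify :: "real^'n^'m \<Rightarrow> complex^'n^'m" where
  "complexify M = (\<chi> i j. complex_of_real (M $ i $ j))"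

definition is_eigenvalue :: "real^'n^'n \<Rightarrow> complex \<Rightarrow> bool" where
  "is_eigenvalue M lam \<longleftrightarrow> det (mat lam - complexify M) = 0"

definition asymp_stable :: "real^'n^'n \<Rightarrow> bool" where
  "asymp_stable M \<longleftrightarrow> (\<forall>lam. is_eigenvalue M lam \<longrightarrow> Re lam < 0)"

definition pos_definite :: "real^'n^'n \<Rightarrow> bool" where
  "pos_definite Q \<longleftrightarrow> transpose Q = Q \<and> (\<forall>x. x \<noteq> 0 \<longrightarrow> x \<bullet> (Q *v x) > 0)"

definition dfig_A :: "real \<Rightarrow> real \<Rightarrow> real \<Rightarrow> real \<Rightarrow> real \<Rightarrow> real \<Rightarrow> real^4^4" where
  "dfig_A ws Rs Rr Ls Lr Lm =
     (let \<sigma> = 1 - Lm\<^sup>2 / (Ls * Lr) in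
      vector [
        vector [- Rs / (\<sigma> * Ls), ws, Rs * Lm / (\<sigma> * Ls * Lr), 0],
        vector [- ws, - Rs / (\<sigma> * Ls), 0, Rs * Lm / (\<sigma> * Ls * Lr)],
        vector [Rr * Lm / (\<sigma> * Ls * Lr), 0, - Rr / (\<sigma> * Lr), ws],
        vector [0, Rr * Lm / (\<sigma> * Ls * Lr), - ws, - Rr / (\<sigma> * Lr)]])"

definition dfig_B :: "real^2^4" where
  "dfig_B = vector [vector [0, 0], vector [0, 0], vector [1, 0], vector [0, 1]]"

end

theory Submission
  imports Defs
begin

(* Write M = A - BK and D = M^-1.  For u = (u1,u2) put y = D (0,0,u1,u2); then
   u^T Q u = c (y1 y4 - y2 y3) with c = Lm / (sigma Ls Lr) > 0, so everything reduces
   to the sign of y1 y4 - y2 y3.  Because the first two rows of B vanish, the first two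
   rows of M coincide with those of A, namely (-a, ws, b, 0) and (-ws, -a, 0, b) with
   b = Rs Lm / (sigma Ls Lr) > 0; since M y = (0,0,u1,u2), these rows give
   b y3 = a y1 - ws y2 and b y4 = ws y1 + a y2, whence b (y1 y4 - y2 y3) = ws (y1^2 + y2^2).
   The right-hand side is positive for u <> 0: otherwise y1 = y2 = 0, then y3 = y4 = 0,
   so y = 0 and u = 0 by invertibility.  Stability enters only through invertibility
   of M (0 is not an eigenvalue). *)

text \<open>Component access for explicit vectors of length 4 (the library stops at length 3).\<close>
lemma vector_4 [simp]:
  "(vector [x, y, z, w] :: ('a::zero)^4) $ 1 = x"
  "(vector [x, y, z, w] :: ('a::zero)^4) $ 2 = y"
  "(vector [x, y, z, w] :: ('a::zero)^4) $ 3 = z"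
  "(vector [x, y, z, w] :: ('a::zero)^4) $ 4 = w"
  unfolding vector_def by simp_all

text \<open>Complexification commutes with the determinant, as det is a polynomial in the entries.\<close>
lemma det_complexify: "det (complexify M) = complex_of_real (det M)"
  unfolding det_def complexify_def by (simp add: of_real_sum of_real_prod)

text \<open>Negating a matrix multiplies its determinant by a constant factor; in particular
  singularity is preserved under negation.\<close>
lemma det_uminus:
  fixes X :: "'a::comm_ring_1^'n^'n"
  shows "det (- X) = det (mat (-1) :: 'a^'n^'n) * det X"
proof -
  have "- X = mat (-1) ** X"
    by (simp add: vec_eq_iff matrix_matrix_mult_def mat_def if_distrib[of "\<lambda>c. c * _"] cong: if_cong)
  then show ?thesis by (simp add: det_mul)
qed

lemma asymp_stable_invertible:
  assumes "asymp_stable M"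
  shows "invertible M"
proof (rule ccontr)
  assume "\<not> invertible M"
  then have "det (complexify M) = 0" by (simp add: invertible_det_nz det_complexify)
  then have "is_eigenvalue M 0" unfolding is_eigenvalue_def by (simp add: det_uminus)
  with assms show False unfolding asymp_stable_def by force
qed

lemma matrix_inv_right:
  assumes "invertible M"
  shows "M ** matrix_inv M = mat 1"
  using someI_ex[OF assms[unfolded invertible_def]] unfolding matrix_inv_def by auto

lemma rotation_cross_identity:
  fixes a b ws y1 y2 y3 y4 :: real
  assumes "b * y3 = a * y1 - ws * y2" "b * y4 = ws * y1 + a * y2"
  shows "b * (y1 * y4 - y2 * y3) = ws * (y1\<^sup>2 + y2\<^sup>2)"
proof -
  have "b * (y1 * y4 - y2 * y3) = y1 * (b * y4) - y2 * (b * y3)" by (simp add: algebra_simps)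
  also have "\<dots> = y1 * (ws * y1 + a * y2) - y2 * (a * y1 - ws * y2)" by (simp only: assms)
  also have "\<dots> = ws * (y1\<^sup>2 + y2\<^sup>2)" by (simp add: algebra_simps power2_eq_square)
  finally show ?thesis .
qed

lemma steady_state_cross_pos:
  fixes M :: "real^4^4" and y :: "real^4" and a b ws u1 u2 :: real
  assumes "invertible M" "ws > 0" "b > 0"
    and row1: "M $ 1 = vector [-a, ws, b, 0]" and row2: "M $ 2 = vector [-ws, -a, 0, b]"
    and My: "M *v y = vector [0, 0, u1, u2]" and u: "(u1, u2) \<noteq> (0, 0)"
  shows "y$1 * y$4 - y$2 * y$3 > 0"
proof -
  have "(M *v y) $ 1 = 0" "(M *v y) $ 2 = 0" using My by simp_all
  then have y3: "b * y$3 = a * y$1 - ws * y$2" and y4: "b * y$4 = ws * y$1 + a * y$2"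
    by (simp_all add: matrix_vector_mult_def sum_4 row1 row2 algebra_simps)
  have "(y$1)\<^sup>2 + (y$2)\<^sup>2 > 0"
  proof (rule ccontr)
    assume "\<not> (y$1)\<^sup>2 + (y$2)\<^sup>2 > 0"
    then have "y$1 = 0" "y$2 = 0" by (simp_all add: not_less sum_power2_le_zero_iff)
    with y3 y4 \<open>b > 0\<close> have "y$3 = 0" "y$4 = 0" by simp_all
    with \<open>y$1 = 0\<close> \<open>y$2 = 0\<close> have "y = 0" by (simp add: vec_eq_iff forall_4)
    then have "vector [0, 0, u1, u2] = (0 :: real^4)" using My by simp
    then have "u1 = 0" "u2 = 0" by (metis vector_4(3) zero_index, metis vector_4(4) zero_index)
    with u show False by simp
  qed
  with \<open>ws > 0\<close> have "b * (y$1 * y$4 - y$2 * y$3) > 0"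
    by (simp add: rotation_cross_identity[OF y3 y4])
  with \<open>b > 0\<close> show ?thesis by (simp add: zero_less_mult_iff)
qed

lemma torque_form_eq_cross:
  fixes D :: "real^4^4" and c :: real and u :: "real^2"
  defines "q1 \<equiv> c * (D$1$3 * D$4$3 - D$2$3 * D$3$3)"
    and "q2 \<equiv> 1/2 * c * (D$1$3 * D$4$4 + D$1$4 * D$4$3 - D$2$3 * D$3$4 - D$2$4 * D$3$3)"
    and "q3 \<equiv> c * (D$1$4 * D$4$4 - D$2$4 * D$3$4)"
    and "y \<equiv> D *v vector [0, 0, u$1, u$2]"
  shows "u \<bullet> (vector [vector [q1, q2], vector [q2, q3]] *v u) = c * (y$1 * y$4 - y$2 * y$3)"
  unfolding assms inner_vec_def matrix_vector_mult_def
  by (simp add: sum_2 sum_4 algebra_simps)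

text \<open>The first two rows of A - BK are those of A, since the first two rows of B vanish.\<close>
lemma dfig_closed_loop_rows:
  fixes ws Rs Rr Ls Lr Lm :: real and K :: "real^4^2"
  defines "\<sigma> \<equiv> 1 - Lm\<^sup>2 / (Ls * Lr)"
  defines "a \<equiv> Rs / (\<sigma> * Ls)" and "b \<equiv> Rs * Lm / (\<sigma> * Ls * Lr)"
  shows "(dfig_A ws Rs Rr Ls Lr Lm - dfig_B ** K) $ 1 = vector [-a, ws, b, 0]"
    and "(dfig_A ws Rs Rr Ls Lr Lm - dfig_B ** K) $ 2 = vector [-ws, -a, 0, b]"
proof -
  have "dfig_B $ 1 = 0" "dfig_B $ 2 = 0"
    unfolding dfig_B_def by (simp_all add: vec_eq_iff forall_2)
  then have "(dfig_B ** K) $ 1 = 0" "(dfig_B ** K) $ 2 = 0"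
    by (simp_all add: matrix_matrix_mult_def vec_eq_iff)
  then show "(dfig_A ws Rs Rr Ls Lr Lm - dfig_B ** K) $ 1 = vector [-a, ws, b, 0]"
    and "(dfig_A ws Rs Rr Ls Lr Lm - dfig_B ** K) $ 2 = vector [-ws, -a, 0, b]"
    by (simp_all add: dfig_A_def Let_def assms)
qed

lemma leakage_factor_pos:
  fixes Ls Lr Lm :: real
  assumes "Lm > 0" "Ls > Lm" "Lr > Lm"
  shows "1 - Lm\<^sup>2 / (Ls * Lr) > 0"
proof -
  have "Lm * Lm < Ls * Lr" using assms by (intro mult_strict_mono) auto
  with assms show ?thesis by (simp add: power2_eq_square)
qed

theorem lemma1:
  fixes ws Rs Rr Ls Lr Lm :: real and K :: "real^4^2"
  assumes "ws > 0" "Rs > 0" "Rr > 0" "Ls > 0" "Lr > 0" "Lm > 0"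
    and "Ls > Lm" "Lr > Lm"
    and "asymp_stable (dfig_A ws Rs Rr Ls Lr Lm - dfig_B ** K)"
  shows "let \<sigma> = 1 - Lm\<^sup>2 / (Ls * Lr);
             D = matrix_inv (dfig_A ws Rs Rr Ls Lr Lm - dfig_B ** K);
             c = Lm / (\<sigma> * Ls * Lr);
             q1 = c * (D$1$3 * D$4$3 - D$2$3 * D$3$3);
             q2 = 1/2 * c * (D$1$3 * D$4$4 + D$1$4 * D$4$3 - D$2$3 * D$3$4 - D$2$4 * D$3$3);
             q3 = c * (D$1$4 * D$4$4 - D$2$4 * D$3$4)
         in pos_definite (vector [vector [q1, q2], vector [q2, q3]] :: real^2^2)"
proof -
  define M where "M = dfig_A ws Rs Rr Ls Lr Lm - dfig_B ** K"
  define D where "D = matrix_inv M"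
  define \<sigma> where "\<sigma> = 1 - Lm\<^sup>2 / (Ls * Lr)"
  define c where "c = Lm / (\<sigma> * Ls * Lr)"
  define q1 where "q1 = c * (D$1$3 * D$4$3 - D$2$3 * D$3$3)"
  define q2 where "q2 = 1/2 * c * (D$1$3 * D$4$4 + D$1$4 * D$4$3 - D$2$3 * D$3$4 - D$2$4 * D$3$3)"
  define q3 where "q3 = c * (D$1$4 * D$4$4 - D$2$4 * D$3$4)"
  define Q where "Q = (vector [vector [q1, q2], vector [q2, q3]] :: real^2^2)"
  have inv: "invertible M" using assms(9) M_def asymp_stable_invertible by simp
  have "\<sigma> > 0" unfolding \<sigma>_def using assms by (intro leakage_factor_pos)
  with assms have b: "Rs * Lm / (\<sigma> * Ls * Lr) > 0" and "c > 0" by (simp_all add: c_def)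
  have "pos_definite Q"
    unfolding pos_definite_def
  proof (intro conjI allI impI)
    show "transpose Q = Q" unfolding Q_def by (simp add: vec_eq_iff forall_2 transpose_def)
  next
    fix u :: "real^2" assume "u \<noteq> 0"
    let ?y = "D *v vector [0, 0, u$1, u$2]"
    have "M *v ?y = vector [0, 0, u$1, u$2]"
      using matrix_inv_right[OF inv] by (simp add: D_def matrix_vector_mul_assoc)
    moreover have "(u$1, u$2) \<noteq> (0, 0)" using \<open>u \<noteq> 0\<close> by (auto simp: vec_eq_iff forall_2)
    ultimately have "?y$1 * ?y$4 - ?y$2 * ?y$3 > 0"
      using steady_state_cross_pos[OF inv \<open>ws > 0\<close> b] dfig_closed_loop_rows M_def \<sigma>_def
      by simp
    with \<open>c > 0\<close> show "u \<bullet> (Q *v u) > 0"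
      unfolding Q_def q1_def q2_def q3_def torque_form_eq_cross by simp
  qed
  then show ?thesis unfolding Let_def Q_def q1_def q2_def q3_def c_def \<sigma>_def D_def M_def .
qed

end
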